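(* Let $S\in\mathbb{S}^d_m$, $G\in\mathcal{M}(S)$, and let $F$ be a closed set in $\mathbb{R}^d$. Then $F\subset G$ if and only if $\psi_F\le\psi_G$.
   Context: $\mathbb{S}^d_m$: symmetric invertible $d\times d$ real matrices with exactly $m$ positive eigenvalues; $S(x,y):=\langle x,Sy\rangle$. $G$ is $S$-monotone if $S(x-y,x-y)\ge0$ for $x,y\in G$; maximal if not a strict subset of another $S$-monotone set; $\mathcal{M}(S)$ = family of maximal $S$-monotone sets. For a set $F$, $\psi_F(y):=\sup_{x\in F}(S(x,y)-\frac12S(x,x))$, $y\in\mathbb{R}^d$. *)

theory Defs
  imports "HOL-Analysis.Analysis"
begin

text \<open>Number of positive eigenvalues (counted with multiplicity) of a symmetric matrix:
  the dimension of the span of all eigenvectors with positive eigenvalues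
  (for symmetric matrices geometric and algebraic multiplicities agree).\<close>
definition pos_eig_count :: "real^'n^'n \<Rightarrow> nat" where
  "pos_eig_count S = dim (span {v. \<exists>c>0. S *v v = c *\<^sub>R v})"

definition Sdm :: "nat \<Rightarrow> (real^'n^'n) set" where
  "Sdm m = {S. transpose S = S \<and> invertible S \<and> pos_eig_count S = m}"

definition Sform :: "real^'n^'n \<Rightarrow> real^'n \<Rightarrow> real^'n \<Rightarrow> real" where
  "Sform S x y = x \<bullet> (S *v y)"

definition S_monotone :: "real^'n^'n \<Rightarrow> (real^'n) set \<Rightarrow> bool" where
  "S_monotone S G \<longleftrightarrow> (\<forall>x\<in>G. \<forall>y\<in>G. Sform S (x - y) (x - y) \<ge> 0)"

definition max_S_monotone :: "real^'n^'n \<Rightarrow> (real^'n) set set" where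
  "max_S_monotone S = {G. S_monotone S G \<and> (\<forall>H. S_monotone S H \<and> G \<subseteq> H \<longrightarrow> H = G)}"

text \<open>psi_F(y) = sup_{x in F} (S(x,y) - S(x,x)/2), valued in the extended reals
  (+infinity allowed; the empty supremum is -infinity).\<close>
definition psi :: "real^'n^'n \<Rightarrow> (real^'n) set \<Rightarrow> real^'n \<Rightarrow> ereal" where
  "psi S F y = (SUP x\<in>F. ereal (Sform S x y - Sform S x x / 2))"

end

theory Submission
  imports Defs
begin

text \<open>Write \<open>q x = S(x,x)\<close>. For symmetric \<open>S\<close> the function maximised in \<open>\<psi>\<^sub>F(z)\<close> is
  \<open>S(x,z) - q x / 2 = q z / 2 - q (x - z) / 2\<close>. On an \<open>S\<close>-monotone set \<open>G\<close> this gives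
  \<open>\<psi>\<^sub>G(z) = q z / 2\<close> for \<open>z \<in> G\<close>. If \<open>x \<in> F\<close> lies outside the maximal set \<open>G\<close>, maximality
  yields \<open>z \<in> G\<close> with \<open>q (x - z) < 0\<close>, whence \<open>\<psi>\<^sub>F(z) > q z / 2 = \<psi>\<^sub>G(z)\<close>.\<close>

lemma Sform_commute:
  assumes "transpose S = S"
  shows "Sform S x y = Sform S y x"
proof -
  have "x \<bullet> (S *v y) = (transpose S *v x) \<bullet> y"
    by (simp add: dot_lmul_matrix transpose_matrix_vector)
  then show ?thesis
    unfolding Sform_def using assms by (simp add: inner_commute)
qed

lemma Sform_diff_diff:
  assumes "transpose S = S"
  shows "Sform S (x - y) (x - y) = Sform S x x - 2 * Sform S x y + Sform S y y"
  using Sform_commute[OF assms, of x y]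
  unfolding Sform_def
  by (simp add: matrix_vector_mult_diff_distrib inner_diff_left inner_diff_right)

lemma Sform_diff_commute: "Sform S (x - y) (x - y) = Sform S (y - x) (y - x)"
  unfolding Sform_def
  by (simp add: matrix_vector_mult_diff_distrib inner_diff_left inner_diff_right)

lemma max_S_monotone_nonmember:
  assumes "G \<in> max_S_monotone S" and "x \<notin> G"
  obtains z where "z \<in> G" and "Sform S (x - z) (x - z) < 0"
proof (rule ccontr)
  assume "\<not> thesis"
  with that have nonneg: "\<forall>z\<in>G. Sform S (x - z) (x - z) \<ge> 0"
    by (meson not_le)
  have "S_monotone S G" and maximal: "\<And>H. S_monotone S H \<Longrightarrow> G \<subseteq> H \<Longrightarrow> H = G"
    using assms(1) unfolding max_S_monotone_def by auto
  then have "S_monotone S (insert x G)"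
    using nonneg Sform_diff_commute[of S x] unfolding S_monotone_def by (auto simp: Sform_def)
  with maximal[of "insert x G"] assms(2) show False
    by auto
qed

lemma psi_mono: "F \<subseteq> G \<Longrightarrow> psi S F y \<le> psi S G y"
  unfolding psi_def by (rule SUP_subset_mono) auto

lemma psi_lower_bound:
  assumes "transpose S = S" and "x \<in> F"
  shows "ereal (Sform S z z / 2 - Sform S (x - z) (x - z) / 2) \<le> psi S F z"
proof -
  have "Sform S z z / 2 - Sform S (x - z) (x - z) / 2 = Sform S x z - Sform S x x / 2"
    using Sform_diff_diff[OF assms(1), of x z] by (simp add: field_simps)
  then show ?thesis
    unfolding psi_def using assms(2) by (auto intro: SUP_upper2)
qed

lemma psi_S_monotone_member:
  assumes "transpose S = S" and "S_monotone S G" and "z \<in> G"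
  shows "psi S G z = ereal (Sform S z z / 2)"
proof (rule antisym)
  show "psi S G z \<le> ereal (Sform S z z / 2)"
    unfolding psi_def
  proof (rule SUP_least)
    fix w assume "w \<in> G"
    then have "Sform S (z - w) (z - w) \<ge> 0"
      using assms(2,3) unfolding S_monotone_def by auto
    then show "ereal (Sform S w z - Sform S w w / 2) \<le> ereal (Sform S z z / 2)"
      using Sform_diff_diff[OF assms(1), of z w] Sform_commute[OF assms(1), of z w] by simp
  qed
  show "ereal (Sform S z z / 2) \<le> psi S G z"
    using psi_lower_bound[OF assms(1,3), of z] by (simp add: Sform_def)
qed

theorem lemma12:
  fixes S :: "real^'n^'n" and G F :: "(real^'n) set" and m :: nat
  assumes "S \<in> Sdm m"
    and "G \<in> max_S_monotone S"
    and "closed F"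
  shows "F \<subseteq> G \<longleftrightarrow> (\<forall>y. psi S F y \<le> psi S G y)"
proof
  show "\<forall>y. psi S F y \<le> psi S G y" if "F \<subseteq> G"
    using psi_mono[OF that] by blast
next
  assume psi_le: "\<forall>y. psi S F y \<le> psi S G y"
  have sym: "transpose S = S"
    using assms(1) unfolding Sdm_def by auto
  have mono: "S_monotone S G"
    using assms(2) unfolding max_S_monotone_def by auto
  show "F \<subseteq> G"
  proof (rule subsetI, rule ccontr)
    fix x assume "x \<in> F" and "x \<notin> G"
    then obtain z where "z \<in> G" and neg: "Sform S (x - z) (x - z) < 0"
      using max_S_monotone_nonmember[OF assms(2)] by blast
    have "psi S G z < ereal (Sform S z z / 2 - Sform S (x - z) (x - z) / 2)"
      using psi_S_monotone_member[OF sym mono \<open>z \<in> G\<close>] neg by simp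
    also have "\<dots> \<le> psi S F z"
      using psi_lower_bound[OF sym \<open>x \<in> F\<close>] .
    finally show False
      using psi_le by (simp add: not_le[symmetric])
  qed
qed

end
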